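(* Let $\mathcal{B}$ be a smooth real Banach space with dual $\mathcal{B}^*$, let $\nu_j\in\mathcal{B}^*$, $j\in\mathbb{N}_m$, be linearly independent and let $\mathbf{y}\in\mathbb{R}^m$. Then $\hat f\in\mathcal{B}$ is a solution of the minimum norm interpolation problem with data $\mathbf{y}$ if and only if $\hat f\in\mathcal{M}_{\mathbf{y}}$ and there exist $c_j\in\mathbb{R}$, $j\in\mathbb{N}_m$, such that $\mathcal{G}(\hat f)=\sum_{j\in\mathbb{N}_m}c_j\nu_j$.
   Context: $\mathcal{B}$ is a real Banach space with dual $\mathcal{B}^*$ and pairing $\langle\nu,f\rangle_{\mathcal{B}}:=\nu(f)$; $\mathbb{N}_m:=\{1,\dots,m\}$; $\mathcal{L}(f):=[\langle\nu_j,f\rangle_{\mathcal{B}}:j\in\mathbb{N}_m]$, $\mathcal{M}_{\mathbf{y}}:=\{f\in\mathcal{B}:\mathcal{L}(f)=\mathbf{y}\}$; a solution of the minimum norm interpolation problem with data $\mathbf{y}$ is an $\hat f\in\mathcal{M}_{\mathbf{y}}$ with $\|\hat f\|_{\mathcal{B}}=\inf\{\|f\|_{\mathcal{B}}:f\in\mathcal{M}_{\mathbf{y}}\}$. The norm is Gâteaux differentiable at $f\neq0$ if for all $h\in\mathcal{B}$ the limit $\lim_{t\to0}(\|f+th\|_{\mathcal{B}}-\|f\|_{\mathcal{B}})/t$ exists; then $\mathcal{G}(f)\in\mathcal{B}^*$ denotes the functional with $\langle\mathcal{G}(f),h\rangle_{\mathcal{B}}$ equal to this limit (the Gâteaux derivative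 of the norm at $f$). By convention $\mathcal{G}(0):=0$. $\mathcal{B}$ is smooth if its norm is Gâteaux differentiable at every nonzero $f$. *)

theory Defs
  imports "HOL-Analysis.Analysis"
begin

definition norm_gateaux_differentiable_at :: "'a::real_normed_vector \<Rightarrow> bool" where
  "norm_gateaux_differentiable_at f \<longleftrightarrow>
     (\<forall>h. \<exists>L. ((\<lambda>t::real. (norm (f + t *\<^sub>R h) - norm f) / t) \<longlongrightarrow> L) (at 0))"

definition smooth_space :: "'a::real_normed_vector itself \<Rightarrow> bool" where
  "smooth_space TYPE('a) \<longleftrightarrow> (\<forall>f::'a. f \<noteq> 0 \<longrightarrow> norm_gateaux_differentiable_at f)"

text \<open>Gateaux derivative of the norm, with the convention G(0) = 0.\<close>
definition norm_gateaux :: "'a::real_normed_vector \<Rightarrow> ('a \<Rightarrow> real)" where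
  "norm_gateaux f = (\<lambda>h. if f = 0 then 0
      else Lim (at (0::real)) (\<lambda>t. (norm (f + t *\<^sub>R h) - norm f) / t))"

definition interp_set :: "nat \<Rightarrow> (nat \<Rightarrow> 'a \<Rightarrow> real) \<Rightarrow> (nat \<Rightarrow> real) \<Rightarrow> 'a set" where
  "interp_set m \<nu> y = {f. \<forall>j\<in>{1..m}. \<nu> j f = y j}"

definition min_norm_interp_solution ::
  "nat \<Rightarrow> (nat \<Rightarrow> 'a::real_normed_vector \<Rightarrow> real) \<Rightarrow> (nat \<Rightarrow> real) \<Rightarrow> 'a \<Rightarrow> bool" where
  "min_norm_interp_solution m \<nu> y fh \<longleftrightarrow>
     fh \<in> interp_set m \<nu> y \<and> norm fh = Inf (norm ` interp_set m \<nu> y)"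

end

theory Submission
  imports Defs
begin

text \<open>
  The Gateaux derivative G(f) of the norm is a linear functional with G(f) f = \<parallel>f\<parallel> and
  G(f) g \<le> \<parallel>g\<parallel> (sublinearity of difference quotients of a convex function, and the triangle
  inequality). If f minimises the norm on the affine set M_y, then t \<mapsto> \<parallel>f + t h\<parallel> is minimal
  at t = 0 for every h in the common kernel of the \<nu>_j, so G(f) vanishes on that kernel and
  hence is a linear combination of the \<nu>_j. Conversely, if G(f) = \<Sum>c_j \<nu>_j then G(f) takes
  the value G(f) f = \<parallel>f\<parallel> at every g \<in> M_y, so \<parallel>f\<parallel> \<le> \<parallel>g\<parallel>.
\<close>

definition norm_diff_quot :: "'a::real_normed_vector \<Rightarrow> 'a \<Rightarrow> real \<Rightarrow> real" where
  "norm_diff_quot f h t = (norm (f + t *\<^sub>R h) - norm f) / t"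

lemma norm_diff_quot_tendsto_norm_gateaux:
  assumes "norm_gateaux_differentiable_at f" "f \<noteq> 0"
  shows "(norm_diff_quot f h \<longlongrightarrow> norm_gateaux f h) (at 0)"
proof -
  obtain L where L: "(norm_diff_quot f h \<longlongrightarrow> L) (at 0)"
    using assms(1) unfolding norm_gateaux_differentiable_at_def norm_diff_quot_def by blast
  moreover have "norm_gateaux f h = L"
    using assms(2) tendsto_Lim[OF _ L]
    by (simp add: norm_gateaux_def norm_diff_quot_def[abs_def])
  ultimately show ?thesis by simp
qed

lemma norm_gateaux_eqI:
  assumes "norm_gateaux_differentiable_at f" "f \<noteq> 0" "(norm_diff_quot f h \<longlongrightarrow> L) (at 0)"
  shows "norm_gateaux f h = L"
  using tendsto_unique[OF _ norm_diff_quot_tendsto_norm_gateaux[OF assms(1,2)] assms(3)] by simp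

lemma norm_gateaux_le_if_eventually_le:
  assumes "norm_gateaux_differentiable_at f" "f \<noteq> 0"
    and "\<forall>\<^sub>F t in at_right 0. norm_diff_quot f h t \<le> B"
  shows "norm_gateaux f h \<le> B"
  using norm_diff_quot_tendsto_norm_gateaux[OF assms(1,2)] assms(3)
  by (intro tendsto_upperbound[of _ _ "at_right (0::real)"]) (simp_all add: filterlim_at_split)

lemma norm_gateaux_ge_if_eventually_ge:
  assumes "norm_gateaux_differentiable_at f" "f \<noteq> 0"
    and "\<forall>\<^sub>F t in at_right 0. B \<le> norm_diff_quot f h t"
  shows "B \<le> norm_gateaux f h"
  using norm_diff_quot_tendsto_norm_gateaux[OF assms(1,2)] assms(3)
  by (intro tendsto_lowerbound[of _ _ "at_right (0::real)"]) (simp_all add: filterlim_at_split)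

lemma tendsto_at_0_rescale:
  assumes "(g \<longlongrightarrow> L) (at (0::real))" "a \<noteq> 0"
  shows "((\<lambda>t. g (a * t)) \<longlongrightarrow> L) (at 0)"
proof -
  have "((\<lambda>t::real. a * t) \<longlongrightarrow> 0) (at 0)" by (auto intro!: tendsto_eq_intros)
  moreover have "\<exists>d>0. \<forall>t. t \<noteq> 0 \<and> norm (t - 0) < d \<longrightarrow> a * t \<noteq> 0"
    using assms(2) by (intro exI[of _ 1]) simp
  ultimately show ?thesis
    by (rule LIM_compose2[OF _ assms(1), unfolded o_def])
qed

lemma norm_diff_quot_scaleR:
  "a \<noteq> 0 \<Longrightarrow> norm_diff_quot f (a *\<^sub>R h) t = a * norm_diff_quot f h (a * t)"
  by (cases "t = 0") (simp_all add: norm_diff_quot_def field_simps)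

lemma norm_gateaux_scaleR:
  assumes "norm_gateaux_differentiable_at f" "f \<noteq> 0"
  shows "norm_gateaux f (a *\<^sub>R h) = a * norm_gateaux f h"
proof (cases "a = 0")
  case True
  then show ?thesis
    using assms by (intro norm_gateaux_eqI) (simp_all add: norm_diff_quot_def[abs_def])
next
  case False
  have "((\<lambda>t. a * norm_diff_quot f h (a * t)) \<longlongrightarrow> a * norm_gateaux f h) (at 0)"
    by (intro tendsto_mult tendsto_const tendsto_at_0_rescale
        norm_diff_quot_tendsto_norm_gateaux assms False)
  moreover have "norm_diff_quot f (a *\<^sub>R h) = (\<lambda>t. a * norm_diff_quot f h (a * t))"
    by (rule ext) (rule norm_diff_quot_scaleR[OF False])
  ultimately show ?thesis using assms by (intro norm_gateaux_eqI) simp_all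
qed

text \<open>Convexity of the norm, with f + t(h + k) the midpoint of f + 2t h and f + 2t k.\<close>
lemma norm_diff_quot_add_le:
  assumes "t > 0"
  shows "norm_diff_quot f (h + k) t \<le> norm_diff_quot f h (2*t) + norm_diff_quot f k (2*t)"
proof -
  let ?f\<^sub>h = "f + (2*t) *\<^sub>R h" and ?f\<^sub>k = "f + (2*t) *\<^sub>R k"
  have "?f\<^sub>h + ?f\<^sub>k = 2 *\<^sub>R (f + t *\<^sub>R (h + k))"
    by (simp add: algebra_simps scaleR_2)
  then have "2 * norm (f + t *\<^sub>R (h + k)) = norm (?f\<^sub>h + ?f\<^sub>k)"
    by (simp only: norm_scaleR abs_numeral)
  then have mid: "2 * norm (f + t *\<^sub>R (h + k)) \<le> norm ?f\<^sub>h + norm ?f\<^sub>k"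
    using norm_triangle_ineq[of ?f\<^sub>h ?f\<^sub>k] by linarith
  have "norm_diff_quot f (h + k) t = 2 * (norm (f + t *\<^sub>R (h + k)) - norm f) / (2*t)"
    unfolding norm_diff_quot_def by (subst mult_divide_mult_cancel_left) simp_all
  also have "\<dots> \<le> ((norm ?f\<^sub>h - norm f) + (norm ?f\<^sub>k - norm f)) / (2*t)"
    using mid assms by (intro divide_right_mono) simp_all
  also have "\<dots> = norm_diff_quot f h (2*t) + norm_diff_quot f k (2*t)"
    unfolding norm_diff_quot_def add_divide_distrib[symmetric] by simp
  finally show ?thesis .
qed

lemma norm_gateaux_add_le:
  assumes "norm_gateaux_differentiable_at f" "f \<noteq> 0"
  shows "norm_gateaux f (h + k) \<le> norm_gateaux f h + norm_gateaux f k"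
proof -
  have "((\<lambda>t. norm_diff_quot f h (2*t) + norm_diff_quot f k (2*t))
          \<longlongrightarrow> norm_gateaux f h + norm_gateaux f k) (at 0)"
    by (intro tendsto_add tendsto_at_0_rescale norm_diff_quot_tendsto_norm_gateaux assms) simp_all
  then have "((\<lambda>t. norm_diff_quot f h (2*t) + norm_diff_quot f k (2*t))
          \<longlongrightarrow> norm_gateaux f h + norm_gateaux f k) (at_right 0)"
    by (simp add: filterlim_at_split)
  moreover have "(norm_diff_quot f (h + k) \<longlongrightarrow> norm_gateaux f (h + k)) (at_right 0)"
    using norm_diff_quot_tendsto_norm_gateaux[OF assms] by (simp add: filterlim_at_split)
  moreover have "\<forall>\<^sub>F t in at_right 0.
      norm_diff_quot f (h + k) t \<le> norm_diff_quot f h (2*t) + norm_diff_quot f k (2*t)"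
    by (rule eventually_mono[OF eventually_at_right_less]) (rule norm_diff_quot_add_le)
  ultimately show ?thesis by (rule tendsto_le[OF trivial_limit_at_right_real])
qed

lemma linear_norm_gateaux:
  assumes "smooth_space TYPE('a::real_normed_vector)"
  shows "linear (norm_gateaux (f::'a))"
proof (cases "f = 0")
  case True
  then show ?thesis by (simp add: norm_gateaux_def linear_zero)
next
  case False
  have diff: "norm_gateaux_differentiable_at f"
    using assms False by (simp add: smooth_space_def)
  note scale = norm_gateaux_scaleR[OF diff False]
  show ?thesis
  proof
    fix h k
    have "norm_gateaux f ((-1) *\<^sub>R (h + k))
            \<le> norm_gateaux f ((-1) *\<^sub>R h) + norm_gateaux f ((-1) *\<^sub>R k)"
      using norm_gateaux_add_le[OF diff False, of "(-1) *\<^sub>R h" "(-1) *\<^sub>R k"]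
      by (simp add: algebra_simps)
    then show "norm_gateaux f (h + k) = norm_gateaux f h + norm_gateaux f k"
      using norm_gateaux_add_le[OF diff False, of h k] unfolding scale by simp
  qed (simp add: scale)
qed

lemma norm_gateaux_self:
  assumes "norm_gateaux_differentiable_at f" "f \<noteq> 0"
  shows "norm_gateaux f f = norm f"
proof (rule norm_gateaux_eqI[OF assms])
  have "norm_diff_quot f f t = norm f" if "t \<noteq> 0" "\<bar>t\<bar> < 1" for t :: real
  proof -
    have "f + t *\<^sub>R f = (1 + t) *\<^sub>R f" by (simp add: algebra_simps)
    then have "norm (f + t *\<^sub>R f) = (1 + t) * norm f"
      using that by simp
    then show ?thesis using that by (simp add: norm_diff_quot_def field_simps)
  qed
  then have "\<forall>\<^sub>F t in at 0. norm f = norm_diff_quot f f t"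
    unfolding eventually_at by (intro exI[of _ 1]) (auto simp: dist_real_def)
  then show "(norm_diff_quot f f \<longlongrightarrow> norm f) (at 0)"
    by (rule Lim_transform_eventually[OF tendsto_const])
qed

lemma norm_gateaux_le_norm:
  assumes "norm_gateaux_differentiable_at f" "f \<noteq> 0"
  shows "norm_gateaux f g \<le> norm g"
proof (rule norm_gateaux_le_if_eventually_le[OF assms])
  show "\<forall>\<^sub>F t in at_right 0. norm_diff_quot f g t \<le> norm g"
  proof (rule eventually_mono[OF eventually_at_right_less])
    fix t :: real assume "0 < t"
    moreover have "norm (f + t *\<^sub>R g) \<le> norm f + t * norm g"
      using norm_triangle_ineq[of f "t *\<^sub>R g"] \<open>0 < t\<close> by simp
    ultimately show "norm_diff_quot f g t \<le> norm g"
      by (simp add: norm_diff_quot_def divide_le_eq algebra_simps)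
  qed
qed

lemma norm_le_if_norm_gateaux_eq_norm:
  assumes "smooth_space TYPE('a::real_normed_vector)" "norm_gateaux f g = norm (f::'a)"
  shows "norm f \<le> norm g"
proof (cases "f = 0")
  case False
  then have "norm_gateaux_differentiable_at f"
    using assms(1) by (simp add: smooth_space_def)
  then show ?thesis using norm_gateaux_le_norm[OF _ False] assms(2) by metis
qed simp

lemma norm_gateaux_eq_0_if_min_on_line:
  assumes "smooth_space TYPE('a::real_normed_vector)"
    and min: "\<And>t. norm (f::'a) \<le> norm (f + t *\<^sub>R h)"
  shows "norm_gateaux f h = 0"
proof (cases "f = 0")
  case True
  then show ?thesis by (simp add: norm_gateaux_def)
next
  case False
  have diff: "norm_gateaux_differentiable_at f"
    using assms(1) False by (simp add: smooth_space_def)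
  have "0 \<le> norm_gateaux f (c *\<^sub>R h)" for c
    using min[of "t * c" for t]
    by (intro norm_gateaux_ge_if_eventually_ge[OF diff False]
        eventually_mono[OF eventually_at_right_less]) (simp add: norm_diff_quot_def)
  from this[of 1] this[of "-1"] show ?thesis
    using norm_gateaux_scaleR[OF diff False, of "-1" h] by simp
qed

text \<open>Induction on the family: if some e with \<nu>_a e = 1 is killed by the other functionals,
  apply the induction hypothesis to G - G(e) \<nu>_a; otherwise \<nu>_a itself vanishes on their
  common kernel.\<close>
lemma linear_combination_if_common_kernel:
  fixes \<nu> :: "'i \<Rightarrow> 'a::real_vector \<Rightarrow> real"
  assumes "finite S" "\<forall>j\<in>S. linear (\<nu> j)" "linear G"
    and "\<forall>h. (\<forall>j\<in>S. \<nu> j h = 0) \<longrightarrow> G h = 0"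
  shows "\<exists>c. \<forall>h. G h = (\<Sum>j\<in>S. c j * \<nu> j h)"
  using assms
proof (induction S arbitrary: G rule: finite_induct)
  case empty
  then show ?case by simp
next
  case (insert a S)
  have lin_a: "linear (\<nu> a)" and lin_S: "\<forall>j\<in>S. linear (\<nu> j)" using insert.prems by auto
  have extend: "\<exists>c. \<forall>h. G h = (\<Sum>j\<in>insert a S. c j * \<nu> j h)"
    if "\<forall>h. G h = ca * \<nu> a h + (\<Sum>j\<in>S. c j * \<nu> j h)" for ca c
  proof -
    have "(\<Sum>j\<in>S. (c(a := ca)) j * \<nu> j h) = (\<Sum>j\<in>S. c j * \<nu> j h)" for h
      using insert.hyps(2) by (intro sum.cong) auto
    then show ?thesis using that insert.hyps by (intro exI[of _ "c(a := ca)"]) simp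
  qed
  show ?case
  proof (cases "\<forall>e. (\<forall>j\<in>S. \<nu> j e = 0) \<longrightarrow> \<nu> a e = 0")
    case True
    then obtain c where "\<forall>h. G h = (\<Sum>j\<in>S. c j * \<nu> j h)"
      using insert.IH[OF lin_S insert.prems(2)] insert.prems(3) by auto
    then show ?thesis by (intro extend[of 0 c]) simp
  next
    case False
    then obtain e0 where e0: "\<forall>j\<in>S. \<nu> j e0 = 0" "\<nu> a e0 \<noteq> 0" by blast
    define e where "e = (1 / \<nu> a e0) *\<^sub>R e0"
    have e_S: "\<forall>j\<in>S. \<nu> j e = 0" and e_a: "\<nu> a e = 1"
      using e0 lin_S lin_a by (simp_all add: e_def linear_scale)
    define G' where "G' = (\<lambda>h. G h - G e * \<nu> a h)"
    have "linear G'"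
      unfolding G'_def using insert.prems(2) lin_a
      by (intro linearI) (auto simp: linear_add linear_scale algebra_simps)
    moreover have "G' h = 0" if h: "\<forall>j\<in>S. \<nu> j h = 0" for h
    proof -
      have "\<forall>j\<in>insert a S. \<nu> j (h - \<nu> a h *\<^sub>R e) = 0"
        using h e_S e_a lin_a lin_S by (auto simp: linear_diff linear_scale)
      then have "G (h - \<nu> a h *\<^sub>R e) = 0" using insert.prems(3) by blast
      then show ?thesis using insert.prems(2) by (simp add: G'_def linear_diff linear_scale)
    qed
    ultimately obtain c where "\<forall>h. G' h = (\<Sum>j\<in>S. c j * \<nu> j h)"
      using insert.IH[OF lin_S] by blast
    then show ?thesis
      unfolding G'_def by (intro extend[of "G e" c]) (metis diff_add_cancel add.commute)
  qed
qed

lemma norm_gateaux_in_span_if_min_norm: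
  assumes "smooth_space TYPE('a::real_normed_vector)" "\<forall>j\<in>{1..m}. linear (\<nu> j)"
    and "f \<in> interp_set m \<nu> y" "\<And>g. g \<in> interp_set m \<nu> y \<Longrightarrow> norm (f::'a) \<le> norm g"
  shows "\<exists>c. norm_gateaux f = (\<lambda>h. \<Sum>j\<in>{1..m}. c j * \<nu> j h)"
proof -
  have "norm_gateaux f h = 0" if "\<forall>j\<in>{1..m}. \<nu> j h = 0" for h
  proof (rule norm_gateaux_eq_0_if_min_on_line[OF assms(1)])
    fix t
    have "f + t *\<^sub>R h \<in> interp_set m \<nu> y"
      using assms(2,3) that by (auto simp: interp_set_def linear_add linear_scale)
    then show "norm f \<le> norm (f + t *\<^sub>R h)" by (rule assms(4))
  qed
  then obtain c where "\<forall>h. norm_gateaux f h = (\<Sum>j\<in>{1..m}. c j * \<nu> j h)"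
    using linear_combination_if_common_kernel[OF _ assms(2) linear_norm_gateaux[OF assms(1)]]
    by blast
  then show ?thesis by (auto simp: fun_eq_iff)
qed

lemma min_norm_if_norm_gateaux_in_span:
  assumes "smooth_space TYPE('a::real_normed_vector)"
    and "f \<in> interp_set m \<nu> y" "g \<in> interp_set m \<nu> y"
    and "norm_gateaux f = (\<lambda>h. \<Sum>j\<in>{1..m}. c j * \<nu> j h)"
  shows "norm (f::'a) \<le> norm g"
proof (rule norm_le_if_norm_gateaux_eq_norm[OF assms(1)])
  have "norm_gateaux f g = norm_gateaux f f"
    using assms(2-4) by (simp add: interp_set_def)
  also have "\<dots> = norm f"
  proof (cases "f = 0")
    case False
    with assms(1) show ?thesis by (simp add: norm_gateaux_self smooth_space_def)
  qed (simp add: norm_gateaux_def)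
  finally show "norm_gateaux f g = norm f" .
qed

lemma min_norm_interp_solution_iff:
  "min_norm_interp_solution m \<nu> y f \<longleftrightarrow>
     f \<in> interp_set m \<nu> y \<and> (\<forall>g\<in>interp_set m \<nu> y. norm f \<le> norm g)"
proof
  have bdd: "bdd_below (norm ` interp_set m \<nu> y)" by (rule bdd_belowI[of _ 0]) auto
  assume "min_norm_interp_solution m \<nu> y f"
  then show "f \<in> interp_set m \<nu> y \<and> (\<forall>g\<in>interp_set m \<nu> y. norm f \<le> norm g)"
    using cInf_lower[OF imageI bdd] by (simp add: min_norm_interp_solution_def)
next
  assume min: "f \<in> interp_set m \<nu> y \<and> (\<forall>g\<in>interp_set m \<nu> y. norm f \<le> norm g)"
  then have "Inf (norm ` interp_set m \<nu> y) = norm f" by (intro cInf_eq_minimum) auto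
  with min show "min_norm_interp_solution m \<nu> y f"
    by (simp add: min_norm_interp_solution_def)
qed

theorem mainTheorem3:
  fixes \<nu> :: "nat \<Rightarrow> 'a::banach \<Rightarrow> real" and m :: nat and y :: "nat \<Rightarrow> real" and fh :: 'a
  assumes smooth: "smooth_space TYPE('a)"
    and dual: "\<forall>j\<in>{1..m}. bounded_linear (\<nu> j)"
    and lin_indep: "\<forall>c::nat \<Rightarrow> real. (\<forall>f. (\<Sum>j\<in>{1..m}. c j * \<nu> j f) = 0)
                       \<longrightarrow> (\<forall>j\<in>{1..m}. c j = 0)"
  shows "min_norm_interp_solution m \<nu> y fh \<longleftrightarrow>
           fh \<in> interp_set m \<nu> y \<and>
           (\<exists>c::nat \<Rightarrow> real. norm_gateaux fh = (\<lambda>h. \<Sum>j\<in>{1..m}. c j * \<nu> j h))"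
proof -
  have lin: "\<forall>j\<in>{1..m}. linear (\<nu> j)" using dual bounded_linear.linear by blast
  show ?thesis
    unfolding min_norm_interp_solution_iff
  proof (intro iffI conjI; elim conjE)
    assume "fh \<in> interp_set m \<nu> y" "\<forall>g\<in>interp_set m \<nu> y. norm fh \<le> norm g"
    then show "\<exists>c. norm_gateaux fh = (\<lambda>h. \<Sum>j\<in>{1..m}. c j * \<nu> j h)"
      by (intro norm_gateaux_in_span_if_min_norm[OF smooth lin]) auto
  next
    assume "fh \<in> interp_set m \<nu> y" "\<exists>c. norm_gateaux fh = (\<lambda>h. \<Sum>j\<in>{1..m}. c j * \<nu> j h)"
    then show "\<forall>g\<in>interp_set m \<nu> y. norm fh \<le> norm g"
      using min_norm_if_norm_gateaux_in_span[OF smooth, of fh m \<nu> y] by auto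
  qed
qed

end
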